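(* Fix $\lambda\ge0$ and let $(p^t)_{t\ge0}$ be the iterates of the Blahut–Arimoto iteration. Then for every $t\ge0$ and every $p\in\Delta_n$, $$\chi(p)-\lambda s^Tp-f_\lambda(p^{t+1},p^t)\le\sum_xp_x\ln\frac{p^{t+1}_x}{p^t_x}.$$
   Context: Setup: integers $n\ge 1$, $m\ge1$; density matrices $\rho_1,\dots,\rho_n\in\mathcal{D}^m$ ($m\times m$ complex positive semidefinite, trace one); $\Delta_n$ the probability simplex in $\mathbb{R}^n$; $s\in\mathbb{R}^n$, $s\ge0$; $\lambda\ge0$. All logarithms are natural; matrix logarithms of positive semidefinite matrices are taken on their support, convention $0\ln0=0$. For $p\in\Delta_n$, $\rho_p=\sum_xp_x\rho_x$, $H(\rho)=-\operatorname{Tr}[\rho\ln\rho]$, $\chi(p)=H(\rho_p)-\sum_xp_xH(\rho_x)$. For $p,p'\in\Delta_n$, $$f_\lambda(p,p')=\sum_x p_x\ln\frac{p'_x}{p_x}+\sum_x p_x\operatorname{Tr}[\rho_x(\ln\rho_x-\ln\rho_{p'})]-\lambda s^Tp$$ (terms with $p_x=0$ are zero; value $-\infty$ if $p_x>0=p'_x$ for some $x$). Blahut–Arimoto iteration: $p^0_x=1/n$ for all $x$; given $p^t$ with positive entries, set $\rho^t=\rho_{p^t}$, $r^t_x=\exp\big(\ln p^t_x+\operatorname{Tr}[\rho_x\ln\rho_x]-\operatorname{Tr}[\rho_x\ln\rho^t]-\lambda s_x\big)$ and $p^{t+1}_x=r^t_x/\sum_yr^t_y$. *)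

theory Defs
  imports "Jordan_Normal_Form.Schur_Decomposition"
begin

definition mtrace :: "complex mat \<Rightarrow> complex" where
  "mtrace A = (\<Sum>i<dim_row A. A $$ (i,i))"

definition hermitian_mat :: "complex mat \<Rightarrow> bool" where
  "hermitian_mat A \<longleftrightarrow> A \<in> carrier_mat (dim_row A) (dim_row A) \<and> mat_adjoint A = A"

definition psd_mat :: "complex mat \<Rightarrow> bool" where
  "psd_mat A \<longleftrightarrow> hermitian_mat A \<and>
     (\<forall>v \<in> carrier_vec (dim_row A).
        Im (conjugate v \<bullet> (A *\<^sub>v v)) = 0 \<and> 0 \<le> Re (conjugate v \<bullet> (A *\<^sub>v v)))"

definition density_mat :: "nat \<Rightarrow> complex mat \<Rightarrow> bool" where
  "density_mat m A \<longleftrightarrow> A \<in> carrier_mat m m \<and> psd_mat A \<and> mtrace A = 1"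

definition unitary_mat :: "complex mat \<Rightarrow> bool" where
  "unitary_mat U \<longleftrightarrow> U \<in> carrier_mat (dim_row U) (dim_row U) \<and>
     mat_adjoint U * U = 1\<^sub>m (dim_row U)"

definition spectral_decomp :: "complex mat \<Rightarrow> complex mat \<Rightarrow> (nat \<Rightarrow> real) \<Rightarrow> bool" where
  "spectral_decomp A U lam \<longleftrightarrow> unitary_mat U \<and> dim_row U = dim_row A \<and>
     A = U * mat_diag (dim_row A) (\<lambda>i. complex_of_real (lam i)) * mat_adjoint U"

text \<open>Matrix logarithm of a positive semidefinite matrix, taken on its support
  (eigenvalue 0 is mapped to 0), via the functional calculus.\<close>
definition mat_ln :: "complex mat \<Rightarrow> complex mat" where
  "mat_ln A = (let (U, lam) = (SOME (U, lam). spectral_decomp A U lam) in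
     U * mat_diag (dim_row A) (\<lambda>i. complex_of_real (if lam i > 0 then ln (lam i) else 0))
       * mat_adjoint U)"

text \<open>Von Neumann entropy H(rho) = - Tr[rho ln rho] (the trace is real).\<close>
definition vn_entropy :: "complex mat \<Rightarrow> real" where
  "vn_entropy A = - Re (mtrace (A * mat_ln A))"

definition simplex :: "nat \<Rightarrow> (nat \<Rightarrow> real) set" where
  "simplex n = {p. (\<forall>x<n. 0 \<le> p x) \<and> (\<Sum>x<n. p x) = 1}"

definition mix :: "nat \<Rightarrow> nat \<Rightarrow> (nat \<Rightarrow> complex mat) \<Rightarrow> (nat \<Rightarrow> real) \<Rightarrow> complex mat" where
  "mix n m rho p = mat m m (\<lambda>(i,j). \<Sum>x<n. complex_of_real (p x) * rho x $$ (i,j))"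

definition holevo :: "nat \<Rightarrow> nat \<Rightarrow> (nat \<Rightarrow> complex mat) \<Rightarrow> (nat \<Rightarrow> real) \<Rightarrow> real" where
  "holevo n m rho p = vn_entropy (mix n m rho p) - (\<Sum>x<n. p x * vn_entropy (rho x))"

text \<open>f_lambda(p,p'); terms with p_x = 0 are zero. (The value -infinity for
  p_x > 0 = p'_x is not modelled; it never arises below since the BA iterates
  are strictly positive.)\<close>
definition f_lam :: "nat \<Rightarrow> nat \<Rightarrow> (nat \<Rightarrow> complex mat) \<Rightarrow> (nat \<Rightarrow> real) \<Rightarrow> real
    \<Rightarrow> (nat \<Rightarrow> real) \<Rightarrow> (nat \<Rightarrow> real) \<Rightarrow> real" where
  "f_lam n m rho s lam p p' =
     (\<Sum>x<n. if p x = 0 then 0 else p x * ln (p' x / p x))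
     + (\<Sum>x<n. if p x = 0 then 0 else
          p x * Re (mtrace (rho x * (mat_ln (rho x) - mat_ln (mix n m rho p')))))
     - lam * (\<Sum>x<n. s x * p x)"

primrec ba_iter :: "nat \<Rightarrow> nat \<Rightarrow> (nat \<Rightarrow> complex mat) \<Rightarrow> (nat \<Rightarrow> real) \<Rightarrow> real
    \<Rightarrow> nat \<Rightarrow> (nat \<Rightarrow> real)" where
  "ba_iter n m rho s lam 0 = (\<lambda>x. if x < n then 1 / real n else 0)"
| "ba_iter n m rho s lam (Suc t) =
     (let p = ba_iter n m rho s lam t;
          r = (\<lambda>x. exp (ln (p x) + Re (mtrace (rho x * mat_ln (rho x)))
                        - Re (mtrace (rho x * mat_ln (mix n m rho p))) - lam * s x))
      in (\<lambda>x. if x < n then r x / (\<Sum>y<n. r y) else 0))"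

end

theory Submission
  imports Defs "Jordan_Normal_Form.Spectral_Radius"
begin

(* Write q = p^t, q' = p^(t+1) and rho_q for the mixture of the rho_x with weights q.
   The update reads q'_x = q_x exp (g_x) / Z with
   g_x = Tr rho_x (ln rho_x - ln rho_q) - lam s_x and Z = sum_y q_y exp (g_y), so
   ln (q'_x / q_x) = g_x - ln Z, and f_lam (q', q) = ln Z because q' sums to one.
   After these substitutions the claim is equivalent to Tr rho_p ln rho_q <= Tr rho_p ln rho_p,
   which is Klein's inequality; it applies because q > 0 puts the support of rho_p inside
   that of rho_q. Klein's inequality is proved in eigenbases (u_i) of rho_p and (v_j) of rho_q:
   the weights |<u_i, v_j>|^2 form a doubly stochastic matrix, and averaging the scalar
   inequality a - b <= a (ln a - ln b) with these weights gives the result.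
   The matrix logarithm rests on the spectral theorem for Hermitian matrices, which is
   proved by the usual deflation induction. *)

section \<open>Adjoints, traces and unitary matrices\<close>

lemma mat_adjoint_carrier [simp]: "A \<in> carrier_mat r c \<Longrightarrow> mat_adjoint A \<in> carrier_mat c r"
  unfolding mat_adjoint_def by auto

lemma dim_mat_adjoint [simp]:
  "dim_row (mat_adjoint A) = dim_col A" "dim_col (mat_adjoint A) = dim_row A"
  unfolding mat_adjoint_def by auto

lemma index_mat_adjoint [simp]:
  "i < dim_col A \<Longrightarrow> j < dim_row A \<Longrightarrow> mat_adjoint A $$ (i,j) = cnj (A $$ (j,i))"
  unfolding mat_adjoint_def by (simp add: mat_of_rows_index)

lemma mat_adjoint_adjoint [simp]: "mat_adjoint (mat_adjoint (A :: complex mat)) = A"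
  by (rule eq_matI) auto

lemma index_mult_mat_sum:
  "A \<in> carrier_mat r k \<Longrightarrow> B \<in> carrier_mat k c \<Longrightarrow> i < r \<Longrightarrow> j < c \<Longrightarrow>
   (A * B) $$ (i,j) = (\<Sum>l<k. A $$ (i,l) * B $$ (l,j))"
  by (auto simp: scalar_prod_def lessThan_atLeast0 intro!: sum.cong)

lemma index_mult_mat_vec_sum:
  "A \<in> carrier_mat r k \<Longrightarrow> v \<in> carrier_vec k \<Longrightarrow> i < r \<Longrightarrow>
   (A *\<^sub>v v) $ i = (\<Sum>l<k. A $$ (i,l) * v $ l)"
  by (auto simp: scalar_prod_def lessThan_atLeast0 intro!: sum.cong)

lemma mtrace_mult_sum:
  assumes A: "A \<in> carrier_mat m m" and B: "B \<in> carrier_mat m m"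
  shows "mtrace (A * B) = (\<Sum>i<m. \<Sum>k<m. A $$ (i,k) * B $$ (k,i))"
  unfolding mtrace_def
proof (rule sum.cong)
  show "{..<dim_row (A * B)} = {..<m}" using A by simp
  fix i assume "i \<in> {..<m}"
  then show "(A * B) $$ (i,i) = (\<Sum>k<m. A $$ (i,k) * B $$ (k,i))"
    by (intro index_mult_mat_sum[OF A B]) auto
qed

lemma mtrace_mult_minus:
  assumes "A \<in> carrier_mat m m" "B \<in> carrier_mat m m" "C \<in> carrier_mat m m"
  shows "mtrace (A * (B - C)) = mtrace (A * B) - mtrace (A * C)"
  using assms by (simp add: mult_minus_distrib_mat[OF assms] mtrace_def sum_subtractf)

lemma mat_adjoint_mult:
  assumes A: "(A :: complex mat) \<in> carrier_mat r k" and B: "B \<in> carrier_mat k c"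
  shows "mat_adjoint (A * B) = mat_adjoint B * mat_adjoint A"
proof (rule eq_matI)
  fix i j assume "i < dim_row (mat_adjoint B * mat_adjoint A)" "j < dim_col (mat_adjoint B * mat_adjoint A)"
  hence ij: "i < c" "j < r" using A B by auto
  have "mat_adjoint (A * B) $$ (i,j) = cnj ((A * B) $$ (j,i))" using A B ij by simp
  also have "\<dots> = cnj (\<Sum>l<k. A $$ (j,l) * B $$ (l,i))"
    by (simp add: index_mult_mat_sum[OF A B ij(2) ij(1)])
  also have "\<dots> = (\<Sum>l<k. cnj (B $$ (l,i)) * cnj (A $$ (j,l)))"
    by (simp add: cnj_sum mult.commute)
  also have "\<dots> = (mat_adjoint B * mat_adjoint A) $$ (i,j)"
    by (subst index_mult_mat_sum[of _ c k _ r]) (use A B ij in auto)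
  finally show "mat_adjoint (A * B) $$ (i,j) = (mat_adjoint B * mat_adjoint A) $$ (i,j)" .
qed (use A B in auto)

lemma index_mult_diag_mult_adjoint:
  assumes U: "U \<in> carrier_mat r k" and ij: "i < r" "j < r"
  shows "(U * mat_diag k d * mat_adjoint U) $$ (i,j) = (\<Sum>l<k. U $$ (i,l) * d l * cnj (U $$ (j,l)))"
proof -
  have "(U * mat_diag k d * mat_adjoint U) $$ (i,j)
      = (\<Sum>l<k. (U * mat_diag k d) $$ (i,l) * mat_adjoint U $$ (l,j))"
    by (rule index_mult_mat_sum[of _ r k _ r]) (use U ij in auto)
  also have "\<dots> = (\<Sum>l<k. U $$ (i,l) * d l * cnj (U $$ (j,l)))"
    using U ij by (intro sum.cong refl) (subst mat_diag_mult_right[OF U], auto simp: mat_diag_def)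
  finally show ?thesis .
qed

lemma unitary_mult_adjoint:
  "U \<in> carrier_mat n n \<Longrightarrow> mat_adjoint U * U = 1\<^sub>m n \<Longrightarrow> U * mat_adjoint U = 1\<^sub>m n"
  by (rule mat_mult_left_right_inverse[of "mat_adjoint U" n U]) auto

lemma unitary_if_orthonormal_cols:
  assumes W: "(W :: complex mat) \<in> carrier_mat n n"
    and orth: "\<And>i j. i < n \<Longrightarrow> j < n \<Longrightarrow>
      (\<Sum>k<n. cnj (W $$ (k,i)) * W $$ (k,j)) = (if i = j then 1 else 0)"
  shows "mat_adjoint W * W = 1\<^sub>m n"
proof (rule eq_matI)
  fix i j assume "i < dim_row (1\<^sub>m n)" "j < dim_col (1\<^sub>m n)"
  then show "(mat_adjoint W * W) $$ (i,j) = 1\<^sub>m n $$ (i,j)"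
    by (subst index_mult_mat_sum[of _ n n _ n]) (use W orth in auto)
qed (use W in auto)

lemma unitary_mult:
  assumes U: "(U :: complex mat) \<in> carrier_mat n n" "mat_adjoint U * U = 1\<^sub>m n"
    and V: "V \<in> carrier_mat n n" "mat_adjoint V * V = 1\<^sub>m n"
  shows "mat_adjoint (U * V) * (U * V) = 1\<^sub>m n"
proof -
  have "mat_adjoint (U * V) * (U * V) = mat_adjoint V * mat_adjoint U * (U * V)"
    by (simp add: mat_adjoint_mult[OF U(1) V(1)])
  also have "\<dots> = mat_adjoint V * (mat_adjoint U * (U * V))"
    by (rule assoc_mult_mat[of _ n n _ n _ n]) (use U V in auto)
  also have "\<dots> = mat_adjoint V * (mat_adjoint U * U * V)"
    by (subst assoc_mult_mat[of _ n n _ n _ n]) (use U V in auto)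
  finally show ?thesis using U V by simp
qed

section \<open>The spectral theorem for Hermitian matrices\<close>

lemma unitary_normalized_cols:
  fixes ws :: "complex vec list"
  assumes ws: "corthogonal ws" "set ws \<subseteq> carrier_vec n" "length ws = n"
  defines "W \<equiv> mat n n (\<lambda>(i,j). complex_of_real (1 / sqrt (Re (ws ! j \<bullet>c ws ! j))) * ws ! j $ i)"
  shows "mat_adjoint W * W = 1\<^sub>m n"
proof (rule unitary_if_orthonormal_cols)
  show "W \<in> carrier_mat n n" unfolding W_def by simp
  define r where "r j = Re (ws ! j \<bullet>c ws ! j)" for j
  fix i j assume ij: "i < n" "j < n"
  have "dim_vec (ws ! i) = n" using ws(2,3) ij by (metis carrier_vecD nth_mem subsetD)
  hence cprod: "ws ! j \<bullet>c ws ! i = (\<Sum>k<n. ws ! j $ k * cnj (ws ! i $ k))"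
    by (simp add: scalar_prod_def lessThan_atLeast0)
  have "ws ! i \<bullet>c ws ! i \<noteq> 0" and orth: "i \<noteq> j \<Longrightarrow> ws ! j \<bullet>c ws ! i = 0"
    using ws ij by (auto simp: corthogonal_def)
  moreover have "ws ! i \<bullet>c ws ! i \<ge> 0" by (rule conjugate_square_ge_0_vec)
  ultimately have r: "r i > 0" "ws ! i \<bullet>c ws ! i = complex_of_real (r i)"
    unfolding r_def by (auto simp: less_eq_complex_def complex_eq_iff)
  have "(\<Sum>k<n. cnj (W $$ (k,i)) * W $$ (k,j))
      = complex_of_real (1 / sqrt (r i) * (1 / sqrt (r j))) * (ws ! j \<bullet>c ws ! i)"
    unfolding cprod W_def r_def using ij by (simp add: sum_distrib_left sum_divide_distrib algebra_simps)
  also have "\<dots> = (if i = j then 1 else 0)"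
    using r orth by (auto simp flip: of_real_mult)
  finally show "(\<Sum>k<n. cnj (W $$ (k,i)) * W $$ (k,j)) = (if i = j then 1 else 0)" .
qed

lemma unitary_with_first_col:
  assumes v: "(v :: complex vec) \<in> carrier_vec n" "v \<noteq> 0\<^sub>v n"
  obtains W c where "W \<in> carrier_mat n n" "mat_adjoint W * W = 1\<^sub>m n" "col W 0 = c \<cdot>\<^sub>v v"
proof -
  interpret cof_vec_space n "TYPE(complex)" .
  define b where "b = basis_completion v"
  from basis_completion[OF v, folded b_def]
  have b: "set b \<subseteq> carrier_vec n" "distinct b" "\<not> lin_dep (set b)" "length b = n" "hd b = v"
    by auto
  define ws where "ws = gram_schmidt n b"
  from gram_schmidt_result[OF b(1-3) ws_def]
  have ws: "corthogonal ws" "set ws \<subseteq> carrier_vec n" "length ws = n" by (auto simp: b(4))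
  have "n > 0" using v by (auto intro!: eq_vecI)
  then obtain vs where "b = v # vs" using b(4,5) by (cases b) auto
  hence "hd ws = v" unfolding ws_def by (simp add: v(1))
  moreover have "ws \<noteq> []" using ws(3) \<open>n > 0\<close> by auto
  ultimately have "ws ! 0 = v" by (simp add: hd_conv_nth)
  define W where
    "W = mat n n (\<lambda>(i,j). complex_of_real (1 / sqrt (Re (ws ! j \<bullet>c ws ! j))) * ws ! j $ i)"
  have "col W 0 = complex_of_real (1 / sqrt (Re (v \<bullet>c v))) \<cdot>\<^sub>v v"
    using v \<open>n > 0\<close> \<open>ws ! 0 = v\<close> by (auto simp: W_def intro!: eq_vecI)
  moreover have "W \<in> carrier_mat n n" by (simp add: W_def)
  ultimately show thesis using that unitary_normalized_cols[OF ws] unfolding W_def by blast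
qed

lemma hermitian_adjoint_conj:
  assumes "(A :: complex mat) \<in> carrier_mat n n" "W \<in> carrier_mat n n" "mat_adjoint A = A"
  shows "mat_adjoint (mat_adjoint W * A * W) = mat_adjoint W * A * W"
proof -
  have "mat_adjoint (mat_adjoint W * A * W) = mat_adjoint W * mat_adjoint (mat_adjoint W * A)"
    by (rule mat_adjoint_mult[of _ n n _ n]) (use assms in auto)
  also have "mat_adjoint (mat_adjoint W * A) = mat_adjoint A * W"
    by (subst mat_adjoint_mult[of _ n n _ n]) (use assms in auto)
  finally show ?thesis using assms by (simp add: assoc_mult_mat[of _ n n _ n _ n])
qed

lemma unitary_conj_eigenvector_col:
  assumes A: "(A :: complex mat) \<in> carrier_mat n n"
    and W: "W \<in> carrier_mat n n" "mat_adjoint W * W = 1\<^sub>m n"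
    and ev: "A *\<^sub>v col W 0 = e \<cdot>\<^sub>v col W 0" and i: "i < n"
  shows "(mat_adjoint W * A * W) $$ (i,0) = (if i = 0 then e else 0)"
proof -
  have "mat_adjoint W * A * W = mat_adjoint W * (A * W)"
    by (rule assoc_mult_mat[of _ n n _ n _ n]) (use A W in auto)
  hence "(mat_adjoint W * A * W) $$ (i,0) = row (mat_adjoint W) i \<bullet> col (A * W) 0"
    using A W i by (simp del: col_mult2)
  also have "col (A * W) 0 = A *\<^sub>v col W 0"
    by (rule col_mult2) (use A W i in auto)
  also note ev
  also have "row (mat_adjoint W) i \<bullet> (e \<cdot>\<^sub>v col W 0) = e * (row (mat_adjoint W) i \<bullet> col W 0)"
    using W i by simp
  also have "row (mat_adjoint W) i \<bullet> col W 0 = (mat_adjoint W * W) $$ (i,0)"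
    using W(1) i by simp
  finally show ?thesis using i by (simp add: W(2))
qed

lemma spectral_decompD:
  assumes "spectral_decomp A U lam" "A \<in> carrier_mat n n"
  shows "U \<in> carrier_mat n n" "mat_adjoint U * U = 1\<^sub>m n"
    "A = U * mat_diag n (\<lambda>i. complex_of_real (lam i)) * mat_adjoint U"
  using assms unfolding spectral_decomp_def unitary_mat_def by auto

lemma spectral_decompI:
  assumes "U \<in> carrier_mat n n" "mat_adjoint U * U = 1\<^sub>m n"
    "A = U * mat_diag n (\<lambda>i. complex_of_real (lam i)) * mat_adjoint U"
  shows "spectral_decomp A U lam"
  using assms unfolding spectral_decomp_def unitary_mat_def by auto

lemma spectral_decomp_unitary_conj:
  assumes A: "A \<in> carrier_mat n n" and W: "W \<in> carrier_mat n n" "mat_adjoint W * W = 1\<^sub>m n"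
    and sd: "spectral_decomp (mat_adjoint W * A * W) U lam"
  shows "spectral_decomp A (W * U) lam"
proof -
  define D where "D = mat_diag n (\<lambda>i. complex_of_real (lam i))"
  have D: "D \<in> carrier_mat n n" by (simp add: D_def)
  have "mat_adjoint W * A * W \<in> carrier_mat n n" using A W by (meson mat_adjoint_carrier mult_carrier_mat)
  have U: "U \<in> carrier_mat n n" "mat_adjoint U * U = 1\<^sub>m n"
    and UDU: "mat_adjoint W * A * W = U * D * mat_adjoint U"
    using spectral_decompD[OF sd \<open>mat_adjoint W * A * W \<in> carrier_mat n n\<close>]
    by (auto simp: D_def)
  note assoc = assoc_mult_mat[of _ n n _ n _ n] mult_carrier_mat[of _ n n _ n]
  have "A = W * mat_adjoint W * A * (W * mat_adjoint W)"
    using A W by (simp add: unitary_mult_adjoint)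
  also have "\<dots> = W * (mat_adjoint W * A * W) * mat_adjoint W"
    using A W by (simp add: assoc)
  also have "\<dots> = (W * U) * D * mat_adjoint (W * U)"
    unfolding UDU using W U D by (simp add: mat_adjoint_mult[of _ n n _ n] assoc)
  finally show ?thesis unfolding D_def
    by (intro spectral_decompI) (use W U in \<open>auto simp: unitary_mult\<close>)
qed

definition block_diag_one :: "complex mat \<Rightarrow> complex mat" where
  "block_diag_one U = mat (Suc (dim_row U)) (Suc (dim_row U))
     (\<lambda>(i,j). if i = 0 \<or> j = 0 then of_bool (i = j) else U $$ (i - 1, j - 1))"

lemma block_diag_one_carrier [simp]:
  "U \<in> carrier_mat m m \<Longrightarrow> block_diag_one U \<in> carrier_mat (Suc m) (Suc m)"
  unfolding block_diag_one_def by auto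

lemma index_block_diag_one [simp]:
  "U \<in> carrier_mat m m \<Longrightarrow> i < Suc m \<Longrightarrow> j < Suc m \<Longrightarrow>
   block_diag_one U $$ (i,j) = (if i = 0 \<or> j = 0 then of_bool (i = j) else U $$ (i - 1, j - 1))"
  unfolding block_diag_one_def by auto

lemma unitary_block_diag_one:
  assumes U: "U \<in> carrier_mat m m" "mat_adjoint U * U = 1\<^sub>m m"
  shows "mat_adjoint (block_diag_one U) * block_diag_one U = 1\<^sub>m (Suc m)"
proof (rule unitary_if_orthonormal_cols)
  let ?B = "block_diag_one U"
  fix i j assume ij: "i < Suc m" "j < Suc m"
  have split: "(\<Sum>k<Suc m. cnj (?B $$ (k,i)) * ?B $$ (k,j)) =
      cnj (?B $$ (0,i)) * ?B $$ (0,j) + (\<Sum>k<m. cnj (?B $$ (Suc k,i)) * ?B $$ (Suc k,j))"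
    by (rule sum.lessThan_Suc_shift)
  show "(\<Sum>k<Suc m. cnj (?B $$ (k,i)) * ?B $$ (k,j)) = (if i = j then 1 else 0)"
  proof (cases "i = 0 \<or> j = 0")
    case True
    thus ?thesis unfolding split using U ij by auto
  next
    case False
    then obtain i' j' where i': "i = Suc i'" "j = Suc j'" by (cases i; cases j) auto
    have "(\<Sum>k<m. cnj (?B $$ (Suc k,i)) * ?B $$ (Suc k,j)) = (mat_adjoint U * U) $$ (i',j')"
      by (subst index_mult_mat_sum[of _ m m _ m]) (use U ij i' in auto)
    thus ?thesis unfolding split using U ij i' by auto
  qed
qed (use U in simp)

lemma spectral_decomp_bordered:
  assumes A: "A \<in> carrier_mat (Suc m) (Suc m)"
    and col0: "\<And>i. i < Suc m \<Longrightarrow> A $$ (i,0) = (if i = 0 then complex_of_real r else 0)"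
    and row0: "\<And>j. j < Suc m \<Longrightarrow> A $$ (0,j) = (if j = 0 then complex_of_real r else 0)"
    and sd: "spectral_decomp (mat m m (\<lambda>(i,j). A $$ (Suc i, Suc j))) U lam"
  shows "spectral_decomp A (block_diag_one U) (\<lambda>i. if i = 0 then r else lam (i - 1))"
proof -
  have U: "U \<in> carrier_mat m m" "mat_adjoint U * U = 1\<^sub>m m"
    and UDU: "mat m m (\<lambda>(i,j). A $$ (Suc i, Suc j))
        = U * mat_diag m (\<lambda>i. complex_of_real (lam i)) * mat_adjoint U"
    using spectral_decompD[OF sd] by auto
  define B where "B = block_diag_one U"
  define d where "d i = complex_of_real (if i = 0 then r else lam (i - 1))" for i
  have B: "B \<in> carrier_mat (Suc m) (Suc m)" using U by (simp add: B_def)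
  have "A = B * mat_diag (Suc m) d * mat_adjoint B"
  proof (rule eq_matI)
    fix i j assume "i < dim_row (B * mat_diag (Suc m) d * mat_adjoint B)"
      "j < dim_col (B * mat_diag (Suc m) d * mat_adjoint B)"
    hence ij: "i < Suc m" "j < Suc m" using B by auto
    have split: "(B * mat_diag (Suc m) d * mat_adjoint B) $$ (i,j) =
        B $$ (i,0) * d 0 * cnj (B $$ (j,0)) +
        (\<Sum>k<m. B $$ (i, Suc k) * d (Suc k) * cnj (B $$ (j, Suc k)))"
      unfolding index_mult_diag_mult_adjoint[OF B ij] by (rule sum.lessThan_Suc_shift)
    show "A $$ (i,j) = (B * mat_diag (Suc m) d * mat_adjoint B) $$ (i,j)"
    proof (cases "i = 0 \<or> j = 0")
      case True
      thus ?thesis unfolding split using U ij col0 row0 by (auto simp: B_def d_def)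
    next
      case False
      then obtain i' j' where i': "i = Suc i'" "j = Suc j'" by (cases i; cases j) auto
      have "(\<Sum>k<m. B $$ (i, Suc k) * d (Suc k) * cnj (B $$ (j, Suc k)))
          = (U * mat_diag m (\<lambda>i. complex_of_real (lam i)) * mat_adjoint U) $$ (i',j')"
        by (subst index_mult_diag_mult_adjoint[OF U(1)]) (use U ij i' in \<open>auto simp: B_def d_def\<close>)
      also have "\<dots> = A $$ (i,j)" unfolding UDU[symmetric] using ij i' by simp
      finally show ?thesis unfolding split using U ij i' by (simp add: B_def)
    qed
  qed (use A B in auto)
  thus ?thesis unfolding d_def B_def
    by (intro spectral_decompI[OF _ unitary_block_diag_one[OF U]]) (use U in simp)
qed

lemma cnj_index_hermitian:
  "mat_adjoint A = A \<Longrightarrow> A \<in> carrier_mat n n \<Longrightarrow> i < n \<Longrightarrow> j < n \<Longrightarrow> cnj (A $$ (j,i)) = A $$ (i,j)"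
  by (metis carrier_matD index_mat_adjoint)

theorem hermitian_spectral_decomp:
  assumes "(A :: complex mat) \<in> carrier_mat n n" "mat_adjoint A = A"
  shows "\<exists>U lam. spectral_decomp A U lam"
  using assms
proof (induction n arbitrary: A)
  case 0
  then have "A = 1\<^sub>m 0 * mat_diag 0 (\<lambda>i. 0) * mat_adjoint (1\<^sub>m 0)" by (auto intro!: eq_matI)
  then have "spectral_decomp A (1\<^sub>m 0) (\<lambda>i. 0)" by (intro spectral_decompI) auto
  thus ?case by blast
next
  case (Suc m)
  note A = Suc.prems
  obtain e where "eigenvalue A e" using spectrum_non_empty[OF A(1)] unfolding spectrum_def by auto
  hence "eigenvector A (find_eigenvector A e) e" by (rule find_eigenvector[OF A(1)])
  then obtain v where v: "v \<in> carrier_vec (Suc m)" "v \<noteq> 0\<^sub>v (Suc m)" "A *\<^sub>v v = e \<cdot>\<^sub>v v"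
    unfolding eigenvector_def using A by auto
  obtain W c where W: "W \<in> carrier_mat (Suc m) (Suc m)" "mat_adjoint W * W = 1\<^sub>m (Suc m)"
    and Wv: "col W 0 = c \<cdot>\<^sub>v v"
    by (rule unitary_with_first_col[OF v(1,2)])
  have "A *\<^sub>v col W 0 = e \<cdot>\<^sub>v col W 0"
    unfolding Wv using A v by (simp add: mult_mat_vec smult_smult_assoc mult.commute)
  define A' where "A' = mat_adjoint W * A * W"
  have A': "A' \<in> carrier_mat (Suc m) (Suc m)" "mat_adjoint A' = A'"
    using A W by (auto simp: A'_def hermitian_adjoint_conj)
  have col0: "A' $$ (i,0) = (if i = 0 then e else 0)" if "i < Suc m" for i
    unfolding A'_def by (rule unitary_conj_eigenvector_col) fact+
  have "cnj e = e" using cnj_index_hermitian[OF A'(2,1), of 0 0] col0[of 0] by simp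
  then obtain r where r: "e = complex_of_real r" by (metis Reals_cnj_iff Reals_cases)
  have row0: "A' $$ (0,j) = (if j = 0 then e else 0)" if "j < Suc m" for j
    using cnj_index_hermitian[OF A'(2,1), of 0 j] col0[of j] that by auto
  define A3 where "A3 = mat m m (\<lambda>(i,j). A' $$ (Suc i, Suc j))"
  have "mat_adjoint A3 = A3"
    by (rule eq_matI) (use A' in \<open>auto simp: A3_def cnj_index_hermitian[OF A'(2,1)]\<close>)
  then obtain U lam where "spectral_decomp A3 U lam" using Suc.IH[of A3] by (auto simp: A3_def)
  hence "spectral_decomp A' (block_diag_one U) (\<lambda>i. if i = 0 then r else lam (i - 1))"
    unfolding A3_def using A'(1) col0 row0 r by (intro spectral_decomp_bordered) auto
  thus ?case using spectral_decomp_unitary_conj[OF A(1) W] unfolding A'_def by blast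
qed

definition ln_supp :: "real \<Rightarrow> real" where
  "ln_supp x = (if 0 < x then ln x else 0)"

lemma mat_ln_spectral:
  assumes A: "A \<in> carrier_mat n n" "mat_adjoint A = A"
  obtains U lam where "spectral_decomp A U lam"
    "mat_ln A = U * mat_diag n (\<lambda>i. complex_of_real (ln_supp (lam i))) * mat_adjoint U"
proof -
  from hermitian_spectral_decomp[OF A] have "\<exists>x. (\<lambda>(U, lam). spectral_decomp A U lam) x" by auto
  from someI_ex[OF this] obtain U lam
    where "(SOME (U, lam). spectral_decomp A U lam) = (U, lam)" "spectral_decomp A U lam"
    by (metis (mono_tags, lifting) case_prod_beta prod.collapse)
  with that show thesis unfolding mat_ln_def ln_supp_def using A(1) by auto
qed

lemma mat_ln_carrier:
  assumes "A \<in> carrier_mat m m" "mat_adjoint A = A"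
  shows "mat_ln A \<in> carrier_mat m m"
proof -
  obtain U lam where sd: "spectral_decomp A U lam"
    and ln: "mat_ln A = U * mat_diag m (\<lambda>i. complex_of_real (ln_supp (lam i))) * mat_adjoint U"
    by (rule mat_ln_spectral[OF assms])
  have "U \<in> carrier_mat m m" by (rule spectral_decompD(1)[OF sd assms(1)])
  thus ?thesis unfolding ln by auto
qed

section \<open>Quadratic forms and traces in an eigenbasis\<close>

definition qform :: "complex mat \<Rightarrow> complex vec \<Rightarrow> complex" where
  "qform A v = conjugate v \<bullet> (A *\<^sub>v v)"

lemma qform_sum:
  "A \<in> carrier_mat m m \<Longrightarrow> v \<in> carrier_vec m \<Longrightarrow>
   qform A v = (\<Sum>k<m. \<Sum>l<m. cnj (v $ k) * A $$ (k,l) * v $ l)"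
  unfolding qform_def
  by (auto simp: scalar_prod_def lessThan_atLeast0 sum_distrib_left mult.assoc intro!: sum.cong)

lemma sum_swap3:
  "(\<Sum>k\<in>A. \<Sum>l\<in>B. \<Sum>i\<in>C. f i k l) = (\<Sum>i\<in>C. \<Sum>k\<in>A. \<Sum>l\<in>B. f i k l)"
proof -
  have "(\<Sum>k\<in>A. \<Sum>l\<in>B. \<Sum>i\<in>C. f i k l) = (\<Sum>k\<in>A. \<Sum>i\<in>C. \<Sum>l\<in>B. f i k l)"
    by (rule sum.cong[OF refl], rule sum.swap)
  also have "\<dots> = (\<Sum>i\<in>C. \<Sum>k\<in>A. \<Sum>l\<in>B. f i k l)" by (rule sum.swap)
  finally show ?thesis .
qed

lemma qform_spectral:
  assumes U: "U \<in> carrier_mat m m" and x: "x \<in> carrier_vec m"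
  shows "qform (U * mat_diag m d * mat_adjoint U) x
    = (\<Sum>i<m. d i * complex_of_real ((cmod ((mat_adjoint U *\<^sub>v x) $ i))\<^sup>2))"
proof -
  define y where "y i = (\<Sum>l<m. cnj (U $$ (l,i)) * x $ l)" for i
  have yU: "(mat_adjoint U *\<^sub>v x) $ i = y i" if "i < m" for i
    by (subst index_mult_mat_vec_sum[of _ m m]) (use U x that in \<open>auto simp: y_def\<close>)
  have M: "U * mat_diag m d * mat_adjoint U \<in> carrier_mat m m" using U by auto
  have "qform (U * mat_diag m d * mat_adjoint U) x =
      (\<Sum>k<m. \<Sum>l<m. cnj (x $ k) * (\<Sum>i<m. U $$ (k,i) * d i * cnj (U $$ (l,i))) * x $ l)"
    unfolding qform_sum[OF M x] using index_mult_diag_mult_adjoint[OF U] by (auto intro!: sum.cong)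
  also have "\<dots> = (\<Sum>k<m. \<Sum>l<m. \<Sum>i<m. d i * (cnj (x $ k) * U $$ (k,i)) * (cnj (U $$ (l,i)) * x $ l))"
    by (simp add: sum_distrib_left sum_distrib_right ac_simps)
  also have "\<dots> = (\<Sum>i<m. \<Sum>k<m. \<Sum>l<m. d i * (cnj (x $ k) * U $$ (k,i)) * (cnj (U $$ (l,i)) * x $ l))"
    by (rule sum_swap3)
  also have "\<dots> = (\<Sum>i<m. d i * ((\<Sum>k<m. cnj (x $ k) * U $$ (k,i)) * (\<Sum>l<m. cnj (U $$ (l,i)) * x $ l)))"
    unfolding sum_product by (simp add: sum_distrib_left mult.assoc)
  also have "\<dots> = (\<Sum>i<m. d i * (cnj (y i) * y i))"
    by (simp add: y_def cnj_sum ac_simps)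
  also have "\<dots> = (\<Sum>i<m. d i * complex_of_real ((cmod (y i))\<^sup>2))"
    by (simp add: complex_norm_square mult.commute del: of_real_power)
  also have "\<dots> = (\<Sum>i<m. d i * complex_of_real ((cmod ((mat_adjoint U *\<^sub>v x) $ i))\<^sup>2))"
    by (rule sum.cong[OF refl]) (simp only: lessThan_iff yU)
  finally show ?thesis .
qed

lemma mtrace_mult_spectral:
  assumes A: "A \<in> carrier_mat m m" and V: "V \<in> carrier_mat m m"
  shows "mtrace (A * (V * mat_diag m d * mat_adjoint V)) = (\<Sum>j<m. d j * qform A (col V j))"
proof -
  have M: "V * mat_diag m d * mat_adjoint V \<in> carrier_mat m m" using V by auto
  have "mtrace (A * (V * mat_diag m d * mat_adjoint V)) =
      (\<Sum>i<m. \<Sum>k<m. A $$ (i,k) * (\<Sum>j<m. V $$ (k,j) * d j * cnj (V $$ (i,j))))"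
    unfolding mtrace_mult_sum[OF A M] using index_mult_diag_mult_adjoint[OF V]
    by (auto intro!: sum.cong)
  also have "\<dots> = (\<Sum>i<m. \<Sum>k<m. \<Sum>j<m. d j * (cnj (V $$ (i,j)) * A $$ (i,k) * V $$ (k,j)))"
    by (simp add: sum_distrib_left ac_simps)
  also have "\<dots> = (\<Sum>j<m. \<Sum>i<m. \<Sum>k<m. d j * (cnj (V $$ (i,j)) * A $$ (i,k) * V $$ (k,j)))"
    by (rule sum_swap3)
  also have "\<dots> = (\<Sum>j<m. d j * qform A (col V j))"
    using A V by (auto simp: qform_sum sum_distrib_left intro!: sum.cong)
  finally show ?thesis .
qed

lemma re_mtrace_mult_spectral:
  assumes "A \<in> carrier_mat m m" "V \<in> carrier_mat m m"
  shows "Re (mtrace (A * (V * mat_diag m (\<lambda>i. complex_of_real (f i)) * mat_adjoint V)))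
    = (\<Sum>j<m. f j * Re (qform A (col V j)))"
  by (simp add: mtrace_mult_spectral[OF assms] Re_sum)

lemma unitary_col_norm_sum:
  assumes X: "X \<in> carrier_mat m m" "mat_adjoint X * X = 1\<^sub>m m" and j: "j < m"
  shows "(\<Sum>i<m. (cmod (X $$ (i,j)))\<^sup>2) = 1"
proof -
  have "complex_of_real (\<Sum>i<m. (cmod (X $$ (i,j)))\<^sup>2) = (\<Sum>i<m. cnj (X $$ (i,j)) * X $$ (i,j))"
    by (simp add: complex_norm_square mult.commute del: of_real_power)
  also have "\<dots> = (mat_adjoint X * X) $$ (j,j)"
    by (subst index_mult_mat_sum[of _ m m _ m]) (use X j in auto)
  also have "\<dots> = 1" using X j by simp
  finally show ?thesis by (simp only: of_real_eq_1_iff)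
qed

lemma unitary_row_norm_sum:
  assumes X: "X \<in> carrier_mat m m" "mat_adjoint X * X = 1\<^sub>m m" and i: "i < m"
  shows "(\<Sum>j<m. (cmod (X $$ (i,j)))\<^sup>2) = 1"
proof -
  have "mat_adjoint (mat_adjoint X) * mat_adjoint X = 1\<^sub>m m"
    using unitary_mult_adjoint[OF X] by simp
  from unitary_col_norm_sum[OF _ this i] X i show ?thesis by (auto intro: sum.cong)
qed

lemma qform_spectral_col:
  assumes U: "U \<in> carrier_mat m m" "mat_adjoint U * U = 1\<^sub>m m" and j: "j < m"
  shows "qform (U * mat_diag m d * mat_adjoint U) (col U j) = d j"
proof -
  have "(mat_adjoint U *\<^sub>v col U j) $ i = (mat_adjoint U * U) $$ (i,j)" if "i < m" for i
    using U(1) j that by simp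
  hence "(mat_adjoint U *\<^sub>v col U j) $ i = (if i = j then 1 else 0)" if "i < m" for i
    using j that by (simp add: U(2))
  hence "qform (U * mat_diag m d * mat_adjoint U) (col U j) = (\<Sum>i<m. if i = j then d j else 0)"
    unfolding qform_spectral[OF U(1) col_dim[of U j, unfolded carrier_matD(1)[OF U(1)]]]
    by (intro sum.cong) auto
  thus ?thesis using j by simp
qed

lemma mtrace_spectral:
  assumes U: "U \<in> carrier_mat m m" "mat_adjoint U * U = 1\<^sub>m m"
  shows "mtrace (U * mat_diag m (\<lambda>i. complex_of_real (a i)) * mat_adjoint U)
    = complex_of_real (\<Sum>i<m. a i)"
proof -
  have "mtrace (U * mat_diag m (\<lambda>i. complex_of_real (a i)) * mat_adjoint U)
      = (\<Sum>i<m. \<Sum>l<m. U $$ (i,l) * complex_of_real (a l) * cnj (U $$ (i,l)))"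
    unfolding mtrace_def using U index_mult_diag_mult_adjoint[OF U(1)] by (auto intro!: sum.cong)
  also have "\<dots> = (\<Sum>l<m. complex_of_real (a l) * complex_of_real (\<Sum>i<m. (cmod (U $$ (i,l)))\<^sup>2))"
    by (subst sum.swap) (simp add: sum_distrib_left complex_norm_square ac_simps del: of_real_power)
  also have "\<dots> = complex_of_real (\<Sum>i<m. a i)"
    using unitary_col_norm_sum[OF U] by simp
  finally show ?thesis .
qed

section \<open>Klein's inequality\<close>

lemma diff_le_mult_ln_diff:
  assumes "0 < (a :: real)" "0 < b"
  shows "a - b \<le> a * (ln a - ln b)"
proof -
  have "ln b - ln a = ln (b / a)" using assms by (simp add: ln_div)
  also have "\<dots> \<le> b / a - 1" using assms by (intro ln_le_minus_one) simp
  finally have "a * (ln b - ln a) \<le> a * (b / a - 1)" using assms(1) by (simp add: mult_left_mono)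
  thus ?thesis using assms(1) by (simp add: algebra_simps)
qed

lemma weighted_diff_le_ln_supp_diff:
  assumes a: "0 \<le> a" and b: "0 \<le> b" and w: "0 \<le> w" and supp: "b = 0 \<Longrightarrow> w * a = 0"
  shows "w * (a - b) \<le> w * a * (ln_supp a - ln_supp b)"
proof (cases "a = 0 \<or> b = 0")
  case True
  thus ?thesis using b w supp by (auto simp: ln_supp_def mult_nonneg_nonneg)
next
  case False
  hence "a - b \<le> a * (ln_supp a - ln_supp b)"
    using a b diff_le_mult_ln_diff[of a b] by (simp add: ln_supp_def)
  thus ?thesis using w by (simp add: mult_left_mono mult.assoc)
qed

lemma doubly_stochastic_ln_supp_le:
  fixes a b :: "nat \<Rightarrow> real" and P :: "nat \<Rightarrow> nat \<Rightarrow> real"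
  assumes P0: "\<And>i j. i < m \<Longrightarrow> j < m \<Longrightarrow> 0 \<le> P i j"
    and row: "\<And>i. i < m \<Longrightarrow> (\<Sum>j<m. P i j) = 1"
    and col: "\<And>j. j < m \<Longrightarrow> (\<Sum>i<m. P i j) = 1"
    and a0: "\<And>i. i < m \<Longrightarrow> 0 \<le> a i" and b0: "\<And>j. j < m \<Longrightarrow> 0 \<le> b j"
    and tr: "(\<Sum>i<m. a i) = (\<Sum>j<m. b j)"
    and supp: "\<And>j. j < m \<Longrightarrow> b j = 0 \<Longrightarrow> (\<Sum>i<m. a i * P i j) = 0"
  shows "(\<Sum>j<m. ln_supp (b j) * (\<Sum>i<m. a i * P i j)) \<le> (\<Sum>i<m. ln_supp (a i) * a i)"
proof -
  have termwise: "P i j * (a i - b j) \<le> P i j * a i * (ln_supp (a i) - ln_supp (b j))"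
    if ij: "i < m" "j < m" for i j
  proof (rule weighted_diff_le_ln_supp_diff[OF a0 b0 P0])
    assume "b j = 0"
    hence "\<forall>i\<in>{..<m}. a i * P i j = 0"
      using supp ij a0 P0 by (subst sum_nonneg_eq_0_iff[symmetric]) auto
    thus "P i j * a i = 0" using ij by (simp add: mult.commute)
  qed (use ij in auto)
  have row_a: "(\<Sum>i<m. \<Sum>j<m. P i j * a i) = (\<Sum>i<m. a i)"
    by (rule sum.cong[OF refl]) (simp add: sum_distrib_right[symmetric] row)
  have col_b: "(\<Sum>i<m. \<Sum>j<m. P i j * b j) = (\<Sum>j<m. b j)"
    by (subst sum.swap) (rule sum.cong[OF refl], simp add: sum_distrib_right[symmetric] col)
  have "0 = (\<Sum>i<m. \<Sum>j<m. P i j * (a i - b j))"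
    using row_a col_b tr by (simp add: right_diff_distrib sum_subtractf)
  also have "\<dots> \<le> (\<Sum>i<m. \<Sum>j<m. P i j * a i * (ln_supp (a i) - ln_supp (b j)))"
    by (intro sum_mono) (simp add: termwise)
  also have "\<dots> = (\<Sum>i<m. \<Sum>j<m. P i j * (a i * ln_supp (a i)))
      - (\<Sum>i<m. \<Sum>j<m. P i j * (a i * ln_supp (b j)))"
    by (simp add: right_diff_distrib sum_subtractf mult.assoc)
  also have "(\<Sum>i<m. \<Sum>j<m. P i j * (a i * ln_supp (a i))) = (\<Sum>i<m. a i * ln_supp (a i))"
    by (rule sum.cong[OF refl]) (simp add: sum_distrib_right[symmetric] row)
  also have "(\<Sum>i<m. \<Sum>j<m. P i j * (a i * ln_supp (b j)))
      = (\<Sum>j<m. ln_supp (b j) * (\<Sum>i<m. a i * P i j))"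
    by (subst sum.swap) (simp add: sum_distrib_left ac_simps)
  finally show ?thesis by (simp add: mult.commute)
qed

lemma psd_mat_hermitian: "psd_mat A \<Longrightarrow> mat_adjoint A = A"
  unfolding psd_mat_def hermitian_mat_def by auto

lemma psd_mat_qform:
  assumes "psd_mat A" "A \<in> carrier_mat m m" "v \<in> carrier_vec m"
  shows "qform A v = complex_of_real (Re (qform A v))" "0 \<le> Re (qform A v)"
  using assms unfolding psd_mat_def qform_def by (auto simp: complex_eq_iff)

lemma psd_matI:
  assumes "A \<in> carrier_mat m m" "mat_adjoint A = A"
    and "\<And>v. v \<in> carrier_vec m \<Longrightarrow> qform A v = complex_of_real (Re (qform A v)) \<and> 0 \<le> Re (qform A v)"
  shows "psd_mat A"
  using assms unfolding psd_mat_def hermitian_mat_def qform_def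
  by (metis Im_complex_of_real carrier_matD(1))

lemma psd_mat_spectral:
  assumes A: "A \<in> carrier_mat m m" "psd_mat A"
  obtains U a where "U \<in> carrier_mat m m" "mat_adjoint U * U = 1\<^sub>m m"
    and "A = U * mat_diag m (\<lambda>i. complex_of_real (a i)) * mat_adjoint U"
    and "mat_ln A = U * mat_diag m (\<lambda>i. complex_of_real (ln_supp (a i))) * mat_adjoint U"
    and "\<And>i. i < m \<Longrightarrow> 0 \<le> a i"
proof -
  obtain U a where sd: "spectral_decomp A U a"
    and ln: "mat_ln A = U * mat_diag m (\<lambda>i. complex_of_real (ln_supp (a i))) * mat_adjoint U"
    using mat_ln_spectral[OF A(1) psd_mat_hermitian[OF A(2)]] by blast
  note U = spectral_decompD[OF sd A(1)]
  have "0 \<le> a i" if "i < m" for i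
  proof -
    have "qform A (col U i) = complex_of_real (a i)"
      using qform_spectral_col[OF U(1,2) that] U(3) by simp
    thus ?thesis using psd_mat_qform(2)[OF A(2,1), of "col U i"] U(1) that by simp
  qed
  with that U ln show thesis by blast
qed

lemma qform_spectral_overlap:
  assumes U: "U \<in> carrier_mat m m" and V: "V \<in> carrier_mat m m" and j: "j < m"
  shows "qform (U * mat_diag m (\<lambda>i. complex_of_real (a i)) * mat_adjoint U) (col V j)
    = complex_of_real (\<Sum>i<m. a i * (cmod ((mat_adjoint U * V) $$ (i,j)))\<^sup>2)"
proof -
  have "(mat_adjoint U *\<^sub>v col V j) $ i = (mat_adjoint U * V) $$ (i,j)" if "i < m" for i
    using U V j that by simp
  thus ?thesis using qform_spectral[OF U, of "col V j"] V j by (simp add: mult.commute)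
qed

theorem klein_inequality:
  assumes A: "A \<in> carrier_mat m m" "psd_mat A" and B: "B \<in> carrier_mat m m" "psd_mat B"
    and tr: "mtrace A = mtrace B"
    and supp: "\<And>v. v \<in> carrier_vec m \<Longrightarrow> qform B v = 0 \<Longrightarrow> qform A v = 0"
  shows "Re (mtrace (A * mat_ln B)) \<le> Re (mtrace (A * mat_ln A))"
proof -
  obtain U a where U: "U \<in> carrier_mat m m" "mat_adjoint U * U = 1\<^sub>m m"
    and Ad: "A = U * mat_diag m (\<lambda>i. complex_of_real (a i)) * mat_adjoint U"
    and lnA: "mat_ln A = U * mat_diag m (\<lambda>i. complex_of_real (ln_supp (a i))) * mat_adjoint U"
    and a0: "\<And>i. i < m \<Longrightarrow> 0 \<le> a i"
    using psd_mat_spectral[OF A] by blast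
  obtain V b where V: "V \<in> carrier_mat m m" "mat_adjoint V * V = 1\<^sub>m m"
    and Bd: "B = V * mat_diag m (\<lambda>i. complex_of_real (b i)) * mat_adjoint V"
    and lnB: "mat_ln B = V * mat_diag m (\<lambda>i. complex_of_real (ln_supp (b i))) * mat_adjoint V"
    and b0: "\<And>j. j < m \<Longrightarrow> 0 \<le> b j"
    using psd_mat_spectral[OF B] by blast
  have tr': "(\<Sum>i<m. a i) = (\<Sum>j<m. b j)"
    using tr mtrace_spectral[OF U, of a] mtrace_spectral[OF V, of b] Ad Bd by (metis of_real_eq_iff)
  define X where "X = mat_adjoint U * V"
  have X: "X \<in> carrier_mat m m" "mat_adjoint X * X = 1\<^sub>m m"
    using unitary_mult[of "mat_adjoint U" m V] U V unitary_mult_adjoint[OF U]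
    unfolding X_def by auto
  define P where "P i j = (cmod (X $$ (i,j)))\<^sup>2" for i j
  have qfAV: "qform A (col V j) = complex_of_real (\<Sum>i<m. a i * P i j)" if "j < m" for j
    unfolding Ad P_def X_def by (rule qform_spectral_overlap[OF U(1) V(1) that])
  have supp': "(\<Sum>i<m. a i * P i j) = 0" if "j < m" "b j = 0" for j
  proof -
    have "complex_of_real (\<Sum>i<m. a i * P i j) = 0"
      using supp[of "col V j"] qform_spectral_col[OF V that(1)] Bd qfAV[of j] V that
      by (simp del: of_real_sum)
    thus ?thesis by (simp only: of_real_eq_0_iff)
  qed
  have "Re (mtrace (A * mat_ln B)) = (\<Sum>j<m. ln_supp (b j) * (\<Sum>i<m. a i * P i j))"
    unfolding lnB re_mtrace_mult_spectral[OF A(1) V(1)] using qfAV by simp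
  also have "\<dots> \<le> (\<Sum>i<m. ln_supp (a i) * a i)"
    by (rule doubly_stochastic_ln_supp_le[OF _ _ _ a0 b0 tr' supp'])
      (use unitary_row_norm_sum[OF X] unitary_col_norm_sum[OF X] in \<open>auto simp: P_def\<close>)
  also have "\<dots> = Re (mtrace (A * mat_ln A))"
    unfolding lnA re_mtrace_mult_spectral[OF A(1) U(1)] using qform_spectral_col[OF U] Ad by simp
  finally show ?thesis .
qed

section \<open>Mixtures of density matrices\<close>

lemma density_matD:
  assumes "density_mat m A"
  shows "A \<in> carrier_mat m m" "psd_mat A" "mtrace A = 1" "mat_adjoint A = A"
  using assms psd_mat_hermitian unfolding density_mat_def by auto

lemma mix_carrier [simp]: "mix n m rho p \<in> carrier_mat m m"
  unfolding mix_def by auto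

lemma dim_mix [simp]: "dim_row (mix n m rho p) = m" "dim_col (mix n m rho p) = m"
  unfolding mix_def by auto

lemma index_mix:
  "i < m \<Longrightarrow> j < m \<Longrightarrow> mix n m rho p $$ (i,j) = (\<Sum>x<n. complex_of_real (p x) * rho x $$ (i,j))"
  unfolding mix_def by simp

lemma qform_mix:
  assumes v: "v \<in> carrier_vec m" and rho: "\<And>x. x < n \<Longrightarrow> rho x \<in> carrier_mat m m"
  shows "qform (mix n m rho p) v = (\<Sum>x<n. complex_of_real (p x) * qform (rho x) v)"
proof -
  have "qform (mix n m rho p) v
      = (\<Sum>k<m. \<Sum>l<m. \<Sum>x<n. complex_of_real (p x) * (cnj (v $ k) * rho x $$ (k,l) * v $ l))"
    unfolding qform_sum[OF mix_carrier v]
    by (intro sum.cong refl) (simp add: index_mix sum_distrib_left sum_distrib_right ac_simps)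
  also have "\<dots> = (\<Sum>x<n. \<Sum>k<m. \<Sum>l<m. complex_of_real (p x) * (cnj (v $ k) * rho x $$ (k,l) * v $ l))"
    by (rule sum_swap3)
  also have "\<dots> = (\<Sum>x<n. complex_of_real (p x) * qform (rho x) v)"
    using qform_sum[OF rho v] by (simp add: sum_distrib_left)
  finally show ?thesis .
qed

lemma mtrace_mix_mult:
  assumes rho: "\<And>x. x < n \<Longrightarrow> rho x \<in> carrier_mat m m" and M: "M \<in> carrier_mat m m"
  shows "mtrace (mix n m rho p * M) = (\<Sum>x<n. complex_of_real (p x) * mtrace (rho x * M))"
proof -
  have "mtrace (mix n m rho p * M)
      = (\<Sum>i<m. \<Sum>k<m. \<Sum>x<n. complex_of_real (p x) * (rho x $$ (i,k) * M $$ (k,i)))"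
    unfolding mtrace_mult_sum[OF mix_carrier M]
    by (intro sum.cong refl) (simp add: index_mix sum_distrib_left sum_distrib_right ac_simps)
  also have "\<dots> = (\<Sum>x<n. \<Sum>i<m. \<Sum>k<m. complex_of_real (p x) * (rho x $$ (i,k) * M $$ (k,i)))"
    by (rule sum_swap3)
  also have "\<dots> = (\<Sum>x<n. complex_of_real (p x) * mtrace (rho x * M))"
    using rho M by (intro sum.cong refl) (simp add: mtrace_mult_sum[of _ m] sum_distrib_left)
  finally show ?thesis .
qed

lemma mtrace_mix:
  assumes "\<And>x. x < n \<Longrightarrow> rho x \<in> carrier_mat m m"
  shows "mtrace (mix n m rho p) = (\<Sum>x<n. complex_of_real (p x) * mtrace (rho x))"
proof -
  have "mtrace (mix n m rho p) = mtrace (mix n m rho p * 1\<^sub>m m)" by simp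
  also have "\<dots> = (\<Sum>x<n. complex_of_real (p x) * mtrace (rho x * 1\<^sub>m m))"
    by (rule mtrace_mix_mult[OF assms]) auto
  also have "\<dots> = (\<Sum>x<n. complex_of_real (p x) * mtrace (rho x))"
    using assms by (intro sum.cong refl) (metis lessThan_iff right_mult_one_mat)
  finally show ?thesis .
qed

lemma hermitian_mix:
  assumes "\<And>x. x < n \<Longrightarrow> rho x \<in> carrier_mat m m" "\<And>x. x < n \<Longrightarrow> mat_adjoint (rho x) = rho x"
  shows "mat_adjoint (mix n m rho p) = mix n m rho p"
proof (rule eq_matI)
  fix i j assume "i < dim_row (mix n m rho p)" "j < dim_col (mix n m rho p)"
  hence ij: "i < m" "j < m" by auto
  have "cnj (rho x $$ (j,i)) = rho x $$ (i,j)" if "x < n" for x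
    using cnj_index_hermitian[OF assms(2)[OF that] assms(1)[OF that] ij] .
  thus "mat_adjoint (mix n m rho p) $$ (i,j) = mix n m rho p $$ (i,j)"
    using ij by (simp add: index_mix cnj_sum)
qed auto

lemma density_mat_qform:
  assumes "density_mat m A" "v \<in> carrier_vec m"
  shows "qform A v = complex_of_real (Re (qform A v))" "0 \<le> Re (qform A v)"
  using psd_mat_qform[OF density_matD(2,1)[OF assms(1)] assms(2)] by auto

lemma qform_mix_density:
  assumes rho: "\<forall>x<n. density_mat m (rho x)" and v: "v \<in> carrier_vec m"
  shows "qform (mix n m rho p) v = complex_of_real (\<Sum>x<n. p x * Re (qform (rho x) v))"
proof -
  have "qform (mix n m rho p) v = (\<Sum>x<n. complex_of_real (p x) * qform (rho x) v)"
    by (rule qform_mix[OF v]) (use rho density_matD in auto)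
  also have "\<dots> = (\<Sum>x<n. complex_of_real (p x * Re (qform (rho x) v)))"
    using rho v density_mat_qform(1) by (intro sum.cong refl) (metis lessThan_iff of_real_mult)
  finally show ?thesis by simp
qed

lemma density_mix:
  assumes rho: "\<forall>x<n. density_mat m (rho x)" and p: "p \<in> simplex n"
  shows "density_mat m (mix n m rho p)"
proof -
  have rc: "\<And>x. x < n \<Longrightarrow> rho x \<in> carrier_mat m m"
    and rh: "\<And>x. x < n \<Longrightarrow> mat_adjoint (rho x) = rho x"
    using rho density_matD(1,4) by blast+
  have p0: "\<And>x. x < n \<Longrightarrow> 0 \<le> p x" and p1: "(\<Sum>x<n. p x) = 1"
    using p unfolding simplex_def by auto
  have "psd_mat (mix n m rho p)"
  proof (rule psd_matI[OF mix_carrier hermitian_mix[OF rc rh]])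
    fix v :: "complex vec" assume v: "v \<in> carrier_vec m"
    have "0 \<le> (\<Sum>x<n. p x * Re (qform (rho x) v))"
      using p0 rho v density_mat_qform(2) by (intro sum_nonneg mult_nonneg_nonneg) auto
    thus "qform (mix n m rho p) v = complex_of_real (Re (qform (mix n m rho p) v))
        \<and> 0 \<le> Re (qform (mix n m rho p) v)"
      unfolding qform_mix_density[OF rho v] by simp
  qed
  moreover have "mtrace (mix n m rho p) = 1"
  proof -
    have "mtrace (mix n m rho p) = (\<Sum>x<n. complex_of_real (p x) * mtrace (rho x))"
      by (rule mtrace_mix) (rule rc)
    also have "\<dots> = (\<Sum>x<n. complex_of_real (p x))"
      using rho density_matD(3) by (intro sum.cong refl) auto
    finally show ?thesis using p1 by (metis of_real_1 of_real_sum)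
  qed
  ultimately show ?thesis unfolding density_mat_def by simp
qed

lemma qform_mix_eq_0:
  assumes rho: "\<forall>x<n. density_mat m (rho x)" and v: "v \<in> carrier_vec m"
    and q: "\<forall>x<n. 0 < q x" and zero: "qform (mix n m rho q) v = 0"
  shows "qform (mix n m rho p) v = 0"
proof -
  have "0 \<le> Re (qform (rho x) v)" if "x < n" for x
    using density_mat_qform(2) rho v that by blast
  hence nonneg: "0 \<le> q x * Re (qform (rho x) v)" if "x \<in> {..<n}" for x
    using q that by (meson lessThan_iff less_imp_le mult_nonneg_nonneg)
  have "(\<Sum>x<n. q x * Re (qform (rho x) v)) = 0"
    using zero unfolding qform_mix_density[OF rho v] by (simp only: of_real_eq_0_iff)
  hence "\<forall>x<n. Re (qform (rho x) v) = 0"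
    using sum_nonneg_eq_0_iff[OF finite_lessThan nonneg] q by fastforce
  thus ?thesis unfolding qform_mix_density[OF rho v] by simp
qed

lemma mix_klein_inequality:
  assumes rho: "\<forall>x<n. density_mat m (rho x)" and p: "p \<in> simplex n"
    and q: "q \<in> simplex n" "\<forall>x<n. 0 < q x"
  shows "Re (mtrace (mix n m rho p * mat_ln (mix n m rho q)))
    \<le> Re (mtrace (mix n m rho p * mat_ln (mix n m rho p)))"
proof (rule klein_inequality)
  show "psd_mat (mix n m rho p)" "psd_mat (mix n m rho q)"
    and "mtrace (mix n m rho p) = mtrace (mix n m rho q)"
    using density_matD(2,3)[OF density_mix[OF rho p]] density_matD(2,3)[OF density_mix[OF rho q(1)]]
    by auto
qed (use qform_mix_eq_0[OF rho _ q(2)] in auto)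

section \<open>The Blahut-Arimoto iterates\<close>

text \<open>In the notation of the update, \<open>r\<^sup>t\<^sub>x = p\<^sup>t\<^sub>x * exp (ba_score \<dots> p\<^sup>t x)\<close>,
  and \<open>ba_norm \<dots> p\<^sup>t\<close> is the normaliser \<open>\<Sum>\<^sub>y r\<^sup>t\<^sub>y\<close>.\<close>

definition ba_score :: "nat \<Rightarrow> nat \<Rightarrow> (nat \<Rightarrow> complex mat) \<Rightarrow> (nat \<Rightarrow> real) \<Rightarrow> real
    \<Rightarrow> (nat \<Rightarrow> real) \<Rightarrow> nat \<Rightarrow> real" where
  "ba_score n m rho s lam p x =
     Re (mtrace (rho x * (mat_ln (rho x) - mat_ln (mix n m rho p)))) - lam * s x"

definition ba_norm :: "nat \<Rightarrow> nat \<Rightarrow> (nat \<Rightarrow> complex mat) \<Rightarrow> (nat \<Rightarrow> real) \<Rightarrow> real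
    \<Rightarrow> (nat \<Rightarrow> real) \<Rightarrow> real" where
  "ba_norm n m rho s lam p = (\<Sum>y<n. p y * exp (ba_score n m rho s lam p y))"

lemma ba_score_eq:
  assumes rho: "\<forall>x<n. density_mat m (rho x)" and x: "x < n"
  shows "ba_score n m rho s lam p x = Re (mtrace (rho x * mat_ln (rho x)))
    - Re (mtrace (rho x * mat_ln (mix n m rho p))) - lam * s x"
proof -
  have rc: "\<And>y. y < n \<Longrightarrow> rho y \<in> carrier_mat m m"
    and rh: "\<And>y. y < n \<Longrightarrow> mat_adjoint (rho y) = rho y"
    using rho density_matD(1,4) by blast+
  have "mat_ln (rho x) \<in> carrier_mat m m" "mat_ln (mix n m rho p) \<in> carrier_mat m m"
    using mat_ln_carrier rc rh hermitian_mix[OF rc rh] x by auto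
  thus ?thesis unfolding ba_score_def using mtrace_mult_minus[OF rc[OF x]] by simp
qed

declare ba_iter.simps(2) [simp del]

lemma ba_iter_simplex:
  assumes n: "1 \<le> n"
  shows "\<forall>x<n. 0 < ba_iter n m rho s lam t x" "ba_iter n m rho s lam t \<in> simplex n"
proof -
  have "(\<forall>x<n. 0 < ba_iter n m rho s lam t x) \<and> (\<Sum>x<n. ba_iter n m rho s lam t x) = 1"
  proof (induction t)
    case 0
    show ?case using n by simp
  next
    case (Suc t)
    define q where "q = ba_iter n m rho s lam t"
    define r where "r x = exp (ln (q x) + Re (mtrace (rho x * mat_ln (rho x)))
        - Re (mtrace (rho x * mat_ln (mix n m rho q))) - lam * s x)" for x
    have eq: "ba_iter n m rho s lam (Suc t) = (\<lambda>x. if x < n then r x / (\<Sum>y<n. r y) else 0)"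
      unfolding q_def r_def by (simp add: ba_iter.simps(2) Let_def)
    have "0 < (\<Sum>y<n. r y)" using n by (intro sum_pos) (auto simp: r_def lessThan_empty_iff)
    then show ?case unfolding eq by (auto simp: r_def simp flip: sum_divide_distrib)
  qed
  thus "\<forall>x<n. 0 < ba_iter n m rho s lam t x" "ba_iter n m rho s lam t \<in> simplex n"
    by (auto simp: simplex_def less_imp_le)
qed

lemma ba_iter_Suc:
  fixes s :: "nat \<Rightarrow> real" and lam :: real and t :: nat
  assumes rho: "\<forall>x<n. density_mat m (rho x)" and n: "1 \<le> n" and x: "x < n"
  defines "q \<equiv> ba_iter n m rho s lam t"
  shows "ba_iter n m rho s lam (Suc t) x = q x * exp (ba_score n m rho s lam q x) / ba_norm n m rho s lam q"
proof -
  have q: "\<forall>y<n. 0 < q y" using ba_iter_simplex(1)[OF n] unfolding q_def by blast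
  have r: "exp (ln (q y) + Re (mtrace (rho y * mat_ln (rho y)))
      - Re (mtrace (rho y * mat_ln (mix n m rho q))) - lam * s y)
      = q y * exp (ba_score n m rho s lam q y)" if "y < n" for y
  proof -
    have "q y * exp (ba_score n m rho s lam q y) = exp (ln (q y) + ba_score n m rho s lam q y)"
      using q that by (simp add: exp_add)
    thus ?thesis by (simp add: ba_score_eq[OF rho that] algebra_simps)
  qed
  show ?thesis using x r by (simp add: ba_iter.simps(2) q_def[symmetric] Let_def ba_norm_def)
qed

lemma ba_norm_pos:
  assumes "1 \<le> n" "\<forall>x<n. 0 < p x"
  shows "0 < ba_norm n m rho s lam p"
  unfolding ba_norm_def using assms by (intro sum_pos) (auto simp: lessThan_empty_iff)

lemma ln_ba_iter_ratio:
  fixes s :: "nat \<Rightarrow> real" and lam :: real and t :: nat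
  assumes rho: "\<forall>x<n. density_mat m (rho x)" and n: "1 \<le> n" and x: "x < n"
  defines "q \<equiv> ba_iter n m rho s lam t"
  shows "ln (ba_iter n m rho s lam (Suc t) x / q x)
    = ba_score n m rho s lam q x - ln (ba_norm n m rho s lam q)"
proof -
  have "q x \<noteq> 0" and q: "\<forall>y<n. 0 < q y"
    using ba_iter_simplex(1)[OF n, of m rho s lam t] x unfolding q_def by auto
  hence "ba_iter n m rho s lam (Suc t) x / q x = exp (ba_score n m rho s lam q x) / ba_norm n m rho s lam q"
    using ba_iter_Suc[OF rho n x, of s lam t] unfolding q_def by simp
  moreover have "0 < ba_norm n m rho s lam q" by (rule ba_norm_pos[OF n q])
  ultimately show ?thesis by (simp add: ln_div)
qed

lemma sum_mult_ln_ba_iter_ratio: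
  fixes s :: "nat \<Rightarrow> real" and lam :: real and t :: nat
  assumes rho: "\<forall>x<n. density_mat m (rho x)" and n: "1 \<le> n" and p: "(\<Sum>x<n. p x) = 1"
  defines "q \<equiv> ba_iter n m rho s lam t"
  shows "(\<Sum>x<n. p x * ln (ba_iter n m rho s lam (Suc t) x / q x))
    = (\<Sum>x<n. p x * ba_score n m rho s lam q x) - ln (ba_norm n m rho s lam q)"
proof -
  have "(\<Sum>x<n. p x * ln (ba_iter n m rho s lam (Suc t) x / q x))
      = (\<Sum>x<n. p x * (ba_score n m rho s lam q x - ln (ba_norm n m rho s lam q)))"
    by (intro sum.cong refl) (simp add: ln_ba_iter_ratio[OF rho n] q_def)
  also have "\<dots> = (\<Sum>x<n. p x * ba_score n m rho s lam q x)
      - (\<Sum>x<n. p x) * ln (ba_norm n m rho s lam q)"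
    by (simp add: right_diff_distrib sum_subtractf sum_distrib_right)
  finally show ?thesis using p by simp
qed

lemma f_lam_ba_iter:
  fixes s :: "nat \<Rightarrow> real" and lam :: real and t :: nat
  assumes rho: "\<forall>x<n. density_mat m (rho x)" and n: "1 \<le> n"
  defines "q \<equiv> ba_iter n m rho s lam t"
  shows "f_lam n m rho s lam (ba_iter n m rho s lam (Suc t)) q = ln (ba_norm n m rho s lam q)"
proof -
  define q' where "q' = ba_iter n m rho s lam (Suc t)"
  define g where "g = ba_score n m rho s lam q"
  define Z where "Z = ba_norm n m rho s lam q"
  have q: "\<forall>x<n. 0 < q x" unfolding q_def by (rule ba_iter_simplex(1)[OF n])
  have q': "\<forall>x<n. 0 < q' x" "(\<Sum>x<n. q' x) = 1"
    using ba_iter_simplex[OF n, of m rho s lam "Suc t"] unfolding q'_def simplex_def by auto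
  have "ln (q x / q' x) = ln Z - g x" if "x < n" for x
  proof -
    have "ln (q x / q' x) = - ln (q' x / q x)" using q q' that by (simp add: ln_div)
    thus ?thesis using ln_ba_iter_ratio[OF rho n that, of s lam t]
      unfolding q_def[symmetric] q'_def[symmetric] g_def Z_def by simp
  qed
  hence "(\<Sum>x<n. if q' x = 0 then 0 else q' x * ln (q x / q' x)) = (\<Sum>x<n. q' x * (ln Z - g x))"
    using q'(1) by (intro sum.cong refl) auto
  moreover have "(\<Sum>x<n. if q' x = 0 then 0 else
      q' x * Re (mtrace (rho x * (mat_ln (rho x) - mat_ln (mix n m rho q)))))
      = (\<Sum>x<n. q' x * (g x + lam * s x))"
    using q'(1) by (intro sum.cong refl) (auto simp: g_def ba_score_def)
  ultimately have "f_lam n m rho s lam q' q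
      = (\<Sum>x<n. q' x * (ln Z - g x)) + (\<Sum>x<n. q' x * (g x + lam * s x)) - lam * (\<Sum>x<n. s x * q' x)"
    unfolding f_lam_def by simp
  also have "\<dots> = ln Z * (\<Sum>x<n. q' x)"
    by (simp add: algebra_simps sum.distrib sum_subtractf sum_distrib_left sum_distrib_right)
  finally show ?thesis using q'(2) unfolding q'_def Z_def by simp
qed

lemma sum_mult_ba_score:
  assumes rho: "\<forall>x<n. density_mat m (rho x)"
  shows "(\<Sum>x<n. p x * ba_score n m rho s lam q x)
    = (\<Sum>x<n. p x * Re (mtrace (rho x * mat_ln (rho x))))
      - Re (mtrace (mix n m rho p * mat_ln (mix n m rho q))) - lam * (\<Sum>x<n. s x * p x)"
proof -
  have rc: "\<And>x. x < n \<Longrightarrow> rho x \<in> carrier_mat m m"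
    and rh: "\<And>x. x < n \<Longrightarrow> mat_adjoint (rho x) = rho x"
    using rho density_matD(1,4) by blast+
  have "mat_ln (mix n m rho q) \<in> carrier_mat m m"
    by (rule mat_ln_carrier[OF mix_carrier hermitian_mix[OF rc rh]])
  hence "Re (mtrace (mix n m rho p * mat_ln (mix n m rho q)))
      = (\<Sum>x<n. p x * Re (mtrace (rho x * mat_ln (mix n m rho q))))"
    by (simp add: mtrace_mix_mult[OF rc] Re_sum)
  thus ?thesis using rho
    by (simp add: ba_score_eq algebra_simps sum_subtractf sum_distrib_left)
qed

theorem corollary2:
  fixes n m :: nat and rho :: "nat \<Rightarrow> complex mat" and s :: "nat \<Rightarrow> real"
    and lam :: real and p :: "nat \<Rightarrow> real" and t :: nat
  assumes "1 \<le> n" and "1 \<le> m"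
    and "\<forall>x<n. density_mat m (rho x)"
    and "\<forall>x<n. 0 \<le> s x"
    and "0 \<le> lam"
    and "p \<in> simplex n"
  shows "holevo n m rho p - lam * (\<Sum>x<n. s x * p x)
           - f_lam n m rho s lam (ba_iter n m rho s lam (Suc t)) (ba_iter n m rho s lam t)
         \<le> (\<Sum>x<n. p x * ln (ba_iter n m rho s lam (Suc t) x / ba_iter n m rho s lam t x))"
proof -
  note n = assms(1) and rho = assms(3) and p = assms(6)
  define q where "q = ba_iter n m rho s lam t"
  define Z where "Z = ba_norm n m rho s lam q"
  have p1: "(\<Sum>x<n. p x) = 1" using p by (simp add: simplex_def)
  have rhs: "(\<Sum>x<n. p x * ln (ba_iter n m rho s lam (Suc t) x / q x))
      = (\<Sum>x<n. p x * ba_score n m rho s lam q x) - ln Z"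
    unfolding q_def Z_def by (rule sum_mult_ln_ba_iter_ratio[OF rho n p1])
  have f: "f_lam n m rho s lam (ba_iter n m rho s lam (Suc t)) q = ln Z"
    unfolding q_def Z_def by (rule f_lam_ba_iter[OF rho n])
  have chi: "holevo n m rho p = (\<Sum>x<n. p x * Re (mtrace (rho x * mat_ln (rho x))))
      - Re (mtrace (mix n m rho p * mat_ln (mix n m rho p)))"
    unfolding holevo_def vn_entropy_def by (simp add: sum_negf)
  have "Re (mtrace (mix n m rho p * mat_ln (mix n m rho q)))
      \<le> Re (mtrace (mix n m rho p * mat_ln (mix n m rho p)))"
    using mix_klein_inequality[OF rho p] ba_iter_simplex[OF n] unfolding q_def by blast
  thus ?thesis using rhs f chi sum_mult_ba_score[OF rho, of p s lam q] unfolding q_def by linarith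
qed

end
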